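(* Let $d=1$. For $x\in\mathbb{R}$, $$\#\Phi(x)=\begin{cases}\aleph_0 & \text{if } x\in\mathbb{Q},\\ 2^{\aleph_0} & \text{if } x\in\mathrm{WA}\setminus\mathbb{Q},\\ 0 & \text{if } x\in\mathrm{Bad}.\end{cases}$$
   Context: For $t\in\mathbb{R}$, $\|t\|$ is the distance from $t$ to $\mathbb{Z}$. Write $\mathbb{N}=\{1,2,\dots\}$. $\mathrm{Bad}=\{x\in\mathbb{R}:\inf_{n\in\mathbb{N}}n\|nx\|>0\}$ and $\mathrm{WA}=\mathbb{R}\setminus\mathrm{Bad}$. $\mathcal{D}$ is the set of all non-increasing $\psi:\mathbb{N}\to\mathbb{R}_{\ge0}$ with $\sum_n\psi(n)=\infty$. $W(\psi)$ is the set of $(x,y)\in\mathbb{R}^2$ with $\|nx+y\|<\psi(n)$ for infinitely many $n\in\mathbb{N}$. $\Pi=\bigcap_{\psi\in\mathcal{D}}W(\psi)$ and $\Phi(x)=\{y\in\mathbb{R}:(x,y)\in\Pi\}$. *)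

theory Defs
  imports "HOL-Analysis.Analysis" "HOL-Library.Equipollence"
begin

definition dZ :: "real \<Rightarrow> real" where
  "dZ t = infdist t \<int>"

definition Bad :: "real set" where
  "Bad = {x. (INF n\<in>{1::nat..}. real n * dZ (real n * x)) > 0}"

definition WA :: "real set" where
  "WA = UNIV - Bad"

text \<open>Non-increasing nonnegative functions on N = {1,2,...} with divergent sum
  (the value at 0 is irrelevant and unconstrained).\<close>
definition DD :: "(nat \<Rightarrow> real) set" where
  "DD = {\<psi>. (\<forall>n\<ge>1. \<psi> n \<ge> 0) \<and> (\<forall>m n. 1 \<le> m \<longrightarrow> m \<le> n \<longrightarrow> \<psi> n \<le> \<psi> m)
          \<and> filterlim (\<lambda>N. \<Sum>n=1..N. \<psi> n) at_top sequentially}"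

definition W :: "(nat \<Rightarrow> real) \<Rightarrow> (real \<times> real) set" where
  "W \<psi> = {(x, y). infinite {n::nat. n \<ge> 1 \<and> dZ (real n * x + y) < \<psi> n}}"

definition PiSet :: "(real \<times> real) set" where
  "PiSet = (\<Inter>\<psi>\<in>DD. W \<psi>)"

definition Phi :: "real \<Rightarrow> real set" where
  "Phi x = {y. (x, y) \<in> PiSet}"

end

theory Submission
  imports Defs
begin

(* A real y lies in Phi x unless n |-> ||nx + y|| eventually dominates some psi in DD.

   If x = a/b, then ||nx + y|| is b-periodic in n, so it either vanishes infinitely often
   (y in Z - N x, a countably infinite set) or is bounded away from 0.

   If x is badly approximable, ||(m - n) x|| >= c / (m - n) yields
   ||nx + y|| + ||mx + y|| >= c / (m - n): the running minimum of ||nx + y|| drops to a new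
   value only after it has accumulated a sum of at least c / 2, so it is itself such a psi.

   If x is irrational and well approximable, choose q_k with q_k ||q_k x|| < 2^-k and
   ||q_(k+1) x|| < ||q_k x|| / 3. For a 0-1 sequence e put y_e = - sum_k e_k (q_k x - round (q_k x))
   and N_j = sum_(k<j) e_k q_k. Then ||N_j x + y_e|| <= 3/2 ||q_j x||, so a dominated psi would
   have sum at most 3/2 * 2^-j over each block [N_j, N_(j+1)), contradicting divergence once
   N_j -> oo, which holds when e_k = 1 for all even k. Since
   ||q_k x|| decays faster than 3^-k, the map e |-> y_e is injective. *)

lemma dZ_eq_round: "dZ t = \<bar>t - of_int (round t)\<bar>"
proof (rule antisym)
  show "dZ t \<le> \<bar>t - of_int (round t)\<bar>"
    unfolding dZ_def using infdist_le[of "of_int (round t)" "\<int>" t] by (simp add: dist_real_def)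
  have round_nearest: "\<bar>t - of_int (round t)\<bar> \<le> \<bar>t - of_int k\<bar>" for k :: int
  proof (rule ccontr)
    assume "\<not> ?thesis"
    moreover have "\<bar>of_int (round t) - t\<bar> \<le> 1/2" by (rule of_int_round_abs_le)
    ultimately have "\<bar>real_of_int k - of_int (round t)\<bar> < 1" by linarith
    hence "k = round t" by linarith
    with \<open>\<not> ?thesis\<close> show False by simp
  qed
  show "\<bar>t - of_int (round t)\<bar> \<le> dZ t"
    unfolding dZ_def infdist_def
    by (auto intro!: cINF_greatest simp: dist_real_def Ints_def round_nearest)
qed

lemma dZ_le: "k \<in> \<int> \<Longrightarrow> dZ t \<le> \<bar>t - k\<bar>"
  unfolding dZ_def using infdist_le[of k "\<int>" t] by (simp add: dist_real_def)

lemma dZ_nonneg: "0 \<le> dZ t"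
  by (simp add: dZ_eq_round)

lemma dZ_le_abs: "dZ t \<le> \<bar>t\<bar>"
  using dZ_le[of 0 t] by simp

lemma dZ_add_Ints: "k \<in> \<int> \<Longrightarrow> dZ (t + k) = dZ t"
proof (elim Ints_cases)
  fix m assume "k = of_int m"
  show "dZ (t + k) = dZ t"
  proof (rule antisym)
    show "dZ (t + k) \<le> dZ t"
      using dZ_le[of "of_int (round t + m)" "t + k"] \<open>k = of_int m\<close> by (simp add: dZ_eq_round)
    show "dZ t \<le> dZ (t + k)"
      using dZ_le[of "of_int (round (t + k) - m)" t] \<open>k = of_int m\<close>
      by (simp add: dZ_eq_round algebra_simps)
  qed
qed

lemma dZ_minus: "dZ (- t) = dZ t"
proof (rule antisym)
  show "dZ (- t) \<le> dZ t" using dZ_le[of "- of_int (round t)" "-t"] by (simp add: dZ_eq_round)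
  show "dZ t \<le> dZ (- t)" using dZ_le[of "- of_int (round (-t))" t] by (simp add: dZ_eq_round)
qed

lemma dZ_diff_le: "dZ (a - b) \<le> dZ a + dZ b"
proof -
  have "dZ (a - b) \<le> \<bar>a - b - (of_int (round a) - of_int (round b))\<bar>"
    by (rule dZ_le) simp
  also have "\<dots> \<le> dZ a + dZ b" by (simp add: dZ_eq_round)
  finally show ?thesis .
qed

lemma dZ_eq_0_iff: "dZ t = 0 \<longleftrightarrow> t \<in> \<int>"
proof
  assume "dZ t = 0"
  hence "t = of_int (round t)" by (simp add: dZ_eq_round)
  thus "t \<in> \<int>" by (metis Ints_of_int)
next
  assume "t \<in> \<int>"
  thus "dZ t = 0" using dZ_le[of t t] dZ_nonneg[of t] by simp
qed

lemma dZ_le_mult: "1 \<le> q \<Longrightarrow> dZ t \<le> real q * dZ t"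
  using mult_right_mono[of 1 "real q" "dZ t"] dZ_nonneg[of t] by simp

lemma dZ_mult_pos_if_irrational: "x \<notin> \<rat> \<Longrightarrow> 1 \<le> q \<Longrightarrow> 0 < dZ (real q * x)"
proof (rule ccontr)
  assume "x \<notin> \<rat>" "1 \<le> q" "\<not> 0 < dZ (real q * x)"
  hence "real q * x \<in> \<int>" using dZ_nonneg[of "real q * x"] by (simp add: dZ_eq_0_iff[symmetric])
  then obtain k where "real q * x = of_int k" by (elim Ints_cases)
  with \<open>1 \<le> q\<close> have "x = of_int k / of_nat q" by (simp add: field_simps)
  with \<open>x \<notin> \<rat>\<close> show False by simp
qed

lemma DD_nonneg: "\<psi> \<in> DD \<Longrightarrow> 1 \<le> n \<Longrightarrow> 0 \<le> \<psi> n"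
  by (simp add: DD_def)

lemma DD_antimono: "\<psi> \<in> DD \<Longrightarrow> 1 \<le> m \<Longrightarrow> m \<le> n \<Longrightarrow> \<psi> n \<le> \<psi> m"
  by (simp add: DD_def)

lemma DD_not_sum_bounded:
  assumes "\<psi> \<in> DD" "\<And>N. (\<Sum>n=1..N. \<psi> n) \<le> B" shows False
proof -
  have "filterlim (\<lambda>N. \<Sum>n=1..N. \<psi> n) at_top sequentially" using assms(1) by (simp add: DD_def)
  hence "eventually (\<lambda>N. B + 1 \<le> (\<Sum>n=1..N. \<psi> n)) sequentially"
    by (simp add: filterlim_at_top)
  then obtain N where "B + 1 \<le> (\<Sum>n=1..N. \<psi> n)" unfolding eventually_sequentially by blast
  with assms(2)[of N] show False by linarith
qed

lemma DD_intro:
  assumes "\<And>n. 1 \<le> n \<Longrightarrow> 0 \<le> \<psi> n"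
    and "\<And>m n. 1 \<le> m \<Longrightarrow> m \<le> n \<Longrightarrow> \<psi> n \<le> \<psi> m"
    and "\<And>B. \<exists>N. B \<le> (\<Sum>n=1..N. \<psi> n)"
  shows "\<psi> \<in> DD"
proof -
  have "eventually (\<lambda>M. B \<le> (\<Sum>n=1..M. \<psi> n)) sequentially" for B
  proof -
    obtain N where N: "B \<le> (\<Sum>n=1..N. \<psi> n)" using assms(3) by blast
    have "(\<Sum>n=1..N. \<psi> n) \<le> (\<Sum>n=1..M. \<psi> n)" if "N \<le> M" for M
      using that assms(1) by (intro sum_mono2) auto
    with N show ?thesis unfolding eventually_sequentially by (meson order.trans)
  qed
  thus ?thesis unfolding DD_def filterlim_at_top using assms(1,2) by blast
qed

lemma DD_pos:
  assumes "\<psi> \<in> DD" "1 \<le> n" shows "0 < \<psi> n"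
proof (rule ccontr)
  assume "\<not> 0 < \<psi> n"
  hence vanish: "\<psi> m = 0" if "n \<le> m" for m
    using DD_antimono[OF assms(1,2) that] DD_nonneg[OF assms(1), of m] DD_nonneg[OF assms] that assms(2)
    by simp
  have "(\<Sum>k=1..N. \<psi> k) \<le> (\<Sum>k=1..n. \<psi> k)" for N
  proof -
    have "(\<Sum>k=1..N. \<psi> k) = (\<Sum>k\<in>{1..N} \<inter> {..n}. \<psi> k)"
      using vanish by (intro sum.mono_neutral_right) auto
    also have "\<dots> \<le> (\<Sum>k=1..n. \<psi> k)"
      using DD_nonneg[OF assms(1)] by (intro sum_mono2) auto
    finally show ?thesis .
  qed
  with assms(1) show False by (rule DD_not_sum_bounded)
qed

lemma const_in_DD: "0 < c \<Longrightarrow> (\<lambda>n. c) \<in> DD"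
proof (rule DD_intro)
  fix B :: real assume "0 < c"
  hence "B \<le> real (nat \<lceil>B / c\<rceil>) * c"
    using real_nat_ceiling_ge[of "B / c"] by (simp add: divide_le_eq)
  also have "\<dots> = (\<Sum>n=1..nat \<lceil>B / c\<rceil>. c)" by simp
  finally show "\<exists>N::nat. B \<le> (\<Sum>n=1..N. c)" by blast
qed auto

lemma Phi_iff:
  "y \<in> Phi x \<longleftrightarrow> (\<forall>\<psi>\<in>DD. infinite {n. 1 \<le> n \<and> dZ (real n * x + y) < \<psi> n})"
  by (simp add: Phi_def PiSet_def W_def)

lemma Phi_frequently_close:
  assumes "y \<in> Phi x" "0 < \<delta>" shows "infinite {n. 1 \<le> n \<and> dZ (real n * x + y) < \<delta>}"
  using assms const_in_DD[of \<delta>] unfolding Phi_iff by fastforce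

lemma in_Phi_if_infinitely_often_integer:
  assumes "infinite {n. real n * x + y \<in> \<int>}" shows "y \<in> Phi x"
  unfolding Phi_iff
proof
  fix \<psi> assume "\<psi> \<in> DD"
  have "{n. real n * x + y \<in> \<int>} - {0} \<subseteq> {n. 1 \<le> n \<and> dZ (real n * x + y) < \<psi> n}"
    using DD_pos[OF \<open>\<psi> \<in> DD\<close>] by (auto simp: dZ_eq_0_iff[symmetric])
  moreover have "infinite ({n. real n * x + y \<in> \<int>} - {0})" using assms by simp
  ultimately show "infinite {n. 1 \<le> n \<and> dZ (real n * x + y) < \<psi> n}" by (rule infinite_super)
qed

lemma Phi_iff_no_dominating_DD:
  "y \<in> Phi x \<longleftrightarrow> \<not> (\<exists>\<psi>\<in>DD. \<exists>n0. \<forall>n\<ge>n0. \<psi> n \<le> dZ (real n * x + y))"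
proof -
  have "finite {n. 1 \<le> n \<and> dZ (real n * x + y) < \<psi> n} \<longleftrightarrow> (\<exists>n0. \<forall>n\<ge>n0. \<psi> n \<le> dZ (real n * x + y))"
    for \<psi>
  proof
    assume "finite {n. 1 \<le> n \<and> dZ (real n * x + y) < \<psi> n}"
    then obtain n0 where "{n. 1 \<le> n \<and> dZ (real n * x + y) < \<psi> n} \<subseteq> {..<n0}"
      using finite_nat_bounded by blast
    hence "\<forall>n\<ge>max n0 1. \<psi> n \<le> dZ (real n * x + y)" by (force simp: not_less)
    thus "\<exists>n0. \<forall>n\<ge>n0. \<psi> n \<le> dZ (real n * x + y)" by blast
  next
    assume "\<exists>n0. \<forall>n\<ge>n0. \<psi> n \<le> dZ (real n * x + y)"
    then obtain n0 where "\<forall>n\<ge>n0. \<psi> n \<le> dZ (real n * x + y)" by blast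
    hence "{n. 1 \<le> n \<and> dZ (real n * x + y) < \<psi> n} \<subseteq> {..<n0}" by (auto simp: not_less[symmetric])
    thus "finite {n. 1 \<le> n \<and> dZ (real n * x + y) < \<psi> n}" by (rule finite_subset) simp
  qed
  thus ?thesis unfolding Phi_iff by blast
qed

section \<open>Badly approximable numbers\<close>

definition running_min :: "(nat \<Rightarrow> real) \<Rightarrow> nat \<Rightarrow> nat \<Rightarrow> real" where
  "running_min a n0 n = Min (a ` {n0..max n n0})"

lemma running_min_le: "n0 \<le> k \<Longrightarrow> k \<le> max n n0 \<Longrightarrow> running_min a n0 n \<le> a k"
  unfolding running_min_def by (intro Min_le) auto

lemma running_min_attained:
  obtains k where "n0 \<le> k" "k \<le> max n n0" "running_min a n0 n = a k"
proof -
  have "running_min a n0 n \<in> a ` {n0..max n n0}"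
    unfolding running_min_def by (intro Min_in) auto
  thus thesis using that by auto
qed

lemma running_min_antimono: "m \<le> n \<Longrightarrow> running_min a n0 n \<le> running_min a n0 m"
  unfolding running_min_def by (intro Min_antimono) auto

locale separated_sequence =
  fixes a :: "nat \<Rightarrow> real" and c :: real
  assumes c_pos: "0 < c"
    and nonneg: "0 \<le> a n"
    and separated: "n < m \<Longrightarrow> c \<le> real (m - n) * (a n + a m)"
begin

lemma eventually_pos:
  obtains n0 where "1 \<le> n0" "\<And>n. n0 \<le> n \<Longrightarrow> 0 < a n"
proof (cases "\<exists>z. a z = 0")
  case True
  then obtain z where z: "a z = 0" by blast
  have "0 < a n" if "Suc z \<le> n" for n
  proof (rule ccontr)
    assume "\<not> 0 < a n"
    hence "a n = 0" using nonneg[of n] by simp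
    with separated[of z n] that z c_pos show False by simp
  qed
  thus thesis using that[of "Suc z"] by simp
next
  case False
  thus thesis using that[of 1] nonneg by (metis less_eq_real_def order.refl)
qed

text \<open>Between a record value \<open>a n\<close> of the running minimum and the next smaller value \<open>a m\<close>,
  the running minimum stays at \<open>a n \<ge> (a n + a m) / 2\<close> for \<open>m - n\<close> steps.\<close>
lemma running_min_block:
  assumes "n0 \<le> n" "running_min a n0 n = a n" "n0 \<le> m'" "a m' < a n"
  obtains m where "n < m" "c / 2 \<le> (\<Sum>k\<in>{n..<m}. running_min a n0 k)" "running_min a n0 m = a m"
proof -
  let ?P = "\<lambda>m. n0 \<le> m \<and> a m < a n"
  define m where "m = (LEAST m. ?P m)"
  have Pm: "?P m" unfolding m_def by (rule LeastI[of ?P m']) (use assms in simp)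
  have not_P: "\<not> ?P j" if "j < m" for j using not_less_Least[of j ?P] that unfolding m_def by blast
  have "n < m"
  proof (rule ccontr)
    assume "\<not> n < m"
    hence "running_min a n0 n \<le> a m" using Pm by (intro running_min_le) auto
    with Pm assms(2) show False by simp
  qed
  have const: "running_min a n0 k = a n" if "n \<le> k" "k < m" for k
  proof (rule antisym)
    show "running_min a n0 k \<le> a n" using that assms(1) by (intro running_min_le) auto
    obtain j where j: "n0 \<le> j" "j \<le> max k n0" "running_min a n0 k = a j"
      by (rule running_min_attained)
    with not_P[of j] that assms(1) show "a n \<le> running_min a n0 k" by auto
  qed
  have new_record: "running_min a n0 m = a m"
  proof (rule antisym)
    show "running_min a n0 m \<le> a m" using Pm by (intro running_min_le) auto
    obtain j where j: "n0 \<le> j" "j \<le> max m n0" "running_min a n0 m = a j"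
      by (rule running_min_attained)
    with not_P[of j] Pm show "a m \<le> running_min a n0 m" by (cases "j < m") auto
  qed
  have "(\<Sum>k\<in>{n..<m}. running_min a n0 k) = real (m - n) * a n" by (simp add: const)
  moreover have "c \<le> real (m - n) * (a n + a m)" by (rule separated[OF \<open>n < m\<close>])
  moreover have "real (m - n) * (a n + a m) \<le> real (m - n) * (2 * a n)"
    using Pm by (intro mult_left_mono) auto
  ultimately have "c / 2 \<le> (\<Sum>k\<in>{n..<m}. running_min a n0 k)" by simp
  with that \<open>n < m\<close> new_record show thesis by blast
qed

lemma running_min_sum_unbounded:
  assumes pos: "\<And>n. n0 \<le> n \<Longrightarrow> 0 < a n" and small: "\<And>\<epsilon>. 0 < \<epsilon> \<Longrightarrow> \<exists>m\<ge>n0. a m < \<epsilon>"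
  shows "\<exists>N\<ge>n0. B \<le> (\<Sum>k\<in>{n0..<N}. running_min a n0 k)"
proof -
  have blocks: "\<exists>N\<ge>n. real K * (c / 2) \<le> (\<Sum>k\<in>{n..<N}. running_min a n0 k)"
    if "n0 \<le> n" "running_min a n0 n = a n" for K n
    using that
  proof (induction K arbitrary: n)
    case 0
    show ?case by auto
  next
    case (Suc K)
    obtain m' where "n0 \<le> m'" "a m' < a n" using small[OF pos[OF Suc.prems(1)]] by blast
    then obtain m where m: "n < m" "c / 2 \<le> (\<Sum>k\<in>{n..<m}. running_min a n0 k)"
      "running_min a n0 m = a m"
      using running_min_block[OF Suc.prems] by blast
    obtain N where N: "m \<le> N" "real K * (c / 2) \<le> (\<Sum>k\<in>{m..<N}. running_min a n0 k)"
      using Suc.IH[of m] m(1,3) Suc.prems(1) by auto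
    have "(\<Sum>k\<in>{n..<N}. running_min a n0 k)
        = (\<Sum>k\<in>{n..<m}. running_min a n0 k) + (\<Sum>k\<in>{m..<N}. running_min a n0 k)"
      using m(1) N(1) by (simp add: sum.atLeastLessThan_concat)
    with m N show ?case by (intro exI[of _ N]) (auto simp: algebra_simps)
  qed
  obtain K :: nat where "B \<le> real K * (c / 2)"
    using real_nat_ceiling_ge[of "B / (c / 2)"] c_pos by (metis divide_le_eq half_gt_zero)
  moreover obtain k where "n0 \<le> k" "k \<le> max n0 n0" "running_min a n0 n0 = a k"
    by (rule running_min_attained)
  ultimately show ?thesis using blocks[of n0 K] by (auto intro: order.trans)
qed

lemma dominating_DD:
  obtains \<psi> n0 where "\<psi> \<in> DD" "\<And>n. n0 \<le> n \<Longrightarrow> \<psi> n \<le> a n"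
proof -
  obtain n0 where n0: "1 \<le> n0" and pos: "\<And>n. n0 \<le> n \<Longrightarrow> 0 < a n"
    using eventually_pos by blast
  show thesis
  proof (cases "\<exists>\<epsilon>>0. \<forall>m\<ge>n0. \<epsilon> \<le> a m")
    case True
    then obtain \<epsilon> where "0 < \<epsilon>" "\<And>m. n0 \<le> m \<Longrightarrow> \<epsilon> \<le> a m" by blast
    with const_in_DD that show thesis by blast
  next
    case False
    hence small: "\<And>\<epsilon>. 0 < \<epsilon> \<Longrightarrow> \<exists>m\<ge>n0. a m < \<epsilon>" by (auto simp: not_le)
    have min_pos: "0 < running_min a n0 n" for n
      by (rule running_min_attained[of n0 n a]) (use pos in auto)
    have "running_min a n0 \<in> DD"
    proof (rule DD_intro)
      show "0 \<le> running_min a n0 n" for n using min_pos[of n] by simp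
      show "running_min a n0 n \<le> running_min a n0 m" if "m \<le> n" for m n
        using that by (rule running_min_antimono)
      fix B
      obtain N where "n0 \<le> N" "B \<le> (\<Sum>k\<in>{n0..<N}. running_min a n0 k)"
        using running_min_sum_unbounded[OF pos small] by blast
      moreover have "(\<Sum>k\<in>{n0..<N}. running_min a n0 k) \<le> (\<Sum>k=1..N. running_min a n0 k)"
        using n0 min_pos by (intro sum_mono2) (auto intro: less_imp_le)
      ultimately show "\<exists>N. B \<le> (\<Sum>k=1..N. running_min a n0 k)" by (blast intro: order.trans)
    qed
    with running_min_le that show thesis by (metis max.cobounded1 order.refl)
  qed
qed

end

lemma Bad_lower_bound:
  assumes "x \<in> Bad"
  obtains c where "0 < c" "\<And>k. 1 \<le> k \<Longrightarrow> c \<le> real k * dZ (real k * x)"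
proof
  show "0 < (INF n\<in>{1::nat..}. real n * dZ (real n * x))" using assms by (simp add: Bad_def)
  show "(INF n\<in>{1::nat..}. real n * dZ (real n * x)) \<le> real k * dZ (real k * x)" if "1 \<le> k" for k
    by (rule cINF_lower) (use that in \<open>auto intro!: bdd_belowI[of _ 0] simp: dZ_nonneg\<close>)
qed

text \<open>If \<open>n x + y\<close> and \<open>m x + y\<close> are both close to integers, then \<open>(m - n) x\<close> is too.\<close>
lemma separated_sequence_if_badly_approximable:
  assumes "0 < c" "\<And>k. 1 \<le> k \<Longrightarrow> c \<le> real k * dZ (real k * x)"
  shows "separated_sequence (\<lambda>n. dZ (real n * x + y)) c"
proof
  fix n m :: nat assume "n < m"
  have "dZ (real (m - n) * x) = dZ ((real m * x + y) - (real n * x + y))"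
    using \<open>n < m\<close> by (simp add: of_nat_diff algebra_simps)
  also have "\<dots> \<le> dZ (real n * x + y) + dZ (real m * x + y)"
    using dZ_diff_le by (metis add.commute)
  finally have "real (m - n) * dZ (real (m - n) * x)
      \<le> real (m - n) * (dZ (real n * x + y) + dZ (real m * x + y))"
    by (intro mult_left_mono) auto
  moreover have "c \<le> real (m - n) * dZ (real (m - n) * x)" using \<open>n < m\<close> by (intro assms(2)) simp
  ultimately show "c \<le> real (m - n) * (dZ (real n * x + y) + dZ (real m * x + y))" by linarith
qed (use assms(1) dZ_nonneg in auto)

lemma Phi_Bad: "x \<in> Bad \<Longrightarrow> Phi x = {}"
proof -
  assume "x \<in> Bad"
  then obtain c where "0 < c" "\<And>k. 1 \<le> k \<Longrightarrow> c \<le> real k * dZ (real k * x)"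
    using Bad_lower_bound by blast
  hence "separated_sequence (\<lambda>n. dZ (real n * x + y)) c" for y
    by (rule separated_sequence_if_badly_approximable)
  hence "y \<notin> Phi x" for y
    by (rule separated_sequence.dominating_DD) (auto simp: Phi_iff_no_dominating_DD)
  thus "Phi x = {}" by blast
qed

section \<open>Rational numbers\<close>

lemma dZ_periodic:
  assumes "real q * x \<in> \<int>" shows "dZ (real n * x + y) = dZ (real (n mod q) * x + y)"
proof -
  have "real n = real (n mod q) + real (n div q) * real q"
    by (metis of_nat_add of_nat_mult mod_div_mult_eq)
  hence "real n * x + y = (real (n mod q) * x + y) + real (n div q) * (real q * x)"
    by (simp add: algebra_simps)
  moreover have "real (n div q) * (real q * x) \<in> \<int>" using assms by simp
  ultimately show ?thesis by (metis dZ_add_Ints)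
qed

lemma Phi_rational: "x \<in> \<rat> \<Longrightarrow> Phi x = {y. \<exists>n. real n * x + y \<in> \<int>}"
proof -
  assume "x \<in> \<rat>"
  then obtain a b where "0 < b" "x = of_int a / of_int b" by (rule Rats_cases')
  define q where "q = nat b"
  have "0 < q" and qx: "real q * x \<in> \<int>" using \<open>0 < b\<close> \<open>x = _\<close> by (simp_all add: q_def)
  show ?thesis
  proof (intro set_eqI iffI; clarsimp)
    fix y assume "y \<in> Phi x"
    show "\<exists>n. real n * x + y \<in> \<int>"
    proof (rule ccontr)
      assume "\<nexists>n. real n * x + y \<in> \<int>"
      define \<delta> where "\<delta> = Min ((\<lambda>n. dZ (real n * x + y)) ` {..<q})"
      have "\<delta> \<in> (\<lambda>n. dZ (real n * x + y)) ` {..<q}"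
        unfolding \<delta>_def using \<open>0 < q\<close> by (intro Min_in) auto
      with \<open>\<nexists>n. _\<close> have "0 < \<delta>" using dZ_nonneg dZ_eq_0_iff by (auto simp: less_le)
      have "\<delta> \<le> dZ (real n * x + y)" for n
        unfolding dZ_periodic[OF qx, of n] \<delta>_def using \<open>0 < q\<close> by (intro Min_le) auto
      hence "{n. 1 \<le> n \<and> dZ (real n * x + y) < \<delta>} = {}" by (auto simp: not_less)
      with Phi_frequently_close[OF \<open>y \<in> Phi x\<close> \<open>0 < \<delta>\<close>] show False by (metis finite.emptyI)
    qed
  next
    fix y n assume n: "real n * x + y \<in> \<int>"
    have "real (n + q * k) * x + y = (real n * x + y) + real k * (real q * x)" for k
      by (simp add: algebra_simps)
    hence "real (n + q * k) * x + y \<in> \<int>" for k using n qx by (metis Ints_add Ints_mult Ints_of_nat)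
    hence "range (\<lambda>k. n + q * k) \<subseteq> {n. real n * x + y \<in> \<int>}" by auto
    moreover have "infinite (range (\<lambda>k. n + q * k))"
      using \<open>0 < q\<close> by (intro range_inj_infinite) (simp add: inj_def)
    ultimately show "y \<in> Phi x"
      by (intro in_Phi_if_infinitely_often_integer) (rule infinite_super)
  qed
qed

lemma Phi_rational_eqpoll_nat:
  assumes "x \<in> \<rat>" shows "Phi x \<approx> (UNIV :: nat set)"
proof -
  have "Phi x = (\<lambda>(n, k). of_int k - real n * x) ` (UNIV :: (nat \<times> int) set)"
    unfolding Phi_rational[OF assms]
  proof safe
    fix y n assume "real n * x + y \<in> \<int>"
    then obtain k where "real n * x + y = of_int k" by (elim Ints_cases)
    thus "y \<in> (\<lambda>(n, k). of_int k - real n * x) ` UNIV" by (intro image_eqI[of _ _ "(n, k)"]) auto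
  next
    fix n k
    show "\<exists>n'. real n' * x + (of_int k - real n * x) \<in> \<int>" by (intro exI[of _ n]) simp
  qed
  hence "countable (Phi x)" by simp
  moreover have "range (of_nat :: nat \<Rightarrow> real) \<subseteq> Phi x"
    unfolding Phi_rational[OF assms] by (force intro: exI[of _ 0])
  hence "infinite (Phi x)"
    by (rule infinite_super) (intro range_inj_infinite, simp add: inj_def)
  ultimately obtain e :: "real \<Rightarrow> nat" where "bij_betw e (Phi x) UNIV"
    by (rule countableE_infinite)
  thus ?thesis unfolding eqpoll_def by blast
qed

section \<open>Irrational well approximable numbers\<close>

lemma WA_approximable:
  assumes "x \<in> WA" "0 < \<epsilon>" obtains q where "1 \<le> q" "real q * dZ (real q * x) < \<epsilon>"
proof -
  have "bdd_below ((\<lambda>n. real n * dZ (real n * x)) ` {1::nat..})"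
    by (auto intro!: bdd_belowI[of _ 0] simp: dZ_nonneg)
  moreover have "(INF n\<in>{1::nat..}. real n * dZ (real n * x)) < \<epsilon>"
    using assms by (simp add: WA_def Bad_def)
  ultimately show thesis using that by (auto simp: cINF_less_iff)
qed

locale rapid_approximations =
  fixes x :: real and q :: "nat \<Rightarrow> nat"
  assumes q_ge_1: "1 \<le> q k"
    and q_dZ_less: "real (q k) * dZ (real (q k) * x) < (1/2) ^ k"
    and dZ_q_Suc_less: "dZ (real (q (Suc k)) * x) < dZ (real (q k) * x) / 3"
    and dZ_q_pos: "0 < dZ (real (q k) * x)"

lemma rapid_approximations_exist:
  assumes "x \<in> WA" "x \<notin> \<rat>" obtains q where "rapid_approximations x q"
proof -
  let ?P = "\<lambda>k q. 1 \<le> q \<and> real q * dZ (real q * x) < (1/2) ^ k"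
  let ?Q = "\<lambda>k q q'. dZ (real q' * x) < dZ (real q * x) / 3"
  have "\<exists>q. ?P 0 q" using WA_approximable[OF assms(1), of 1] by auto
  moreover have "\<exists>q'. ?P (Suc k) q' \<and> ?Q k q q'" if "?P k q" for k q
  proof -
    have "0 < min ((1/2) ^ Suc k) (dZ (real q * x) / 3)"
      using dZ_mult_pos_if_irrational[OF assms(2)] that by simp
    then obtain q' where "1 \<le> q'" "real q' * dZ (real q' * x) < min ((1/2) ^ Suc k) (dZ (real q * x) / 3)"
      using WA_approximable[OF assms(1)] by blast
    with dZ_le_mult[of q' "real q' * x"] show ?thesis by auto
  qed
  ultimately obtain q where "\<forall>k. ?P k (q k) \<and> ?Q k (q k) (q (Suc k))"
    using dependent_nat_choice[of ?P ?Q] by blast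
  with dZ_mult_pos_if_irrational[OF assms(2)] have "rapid_approximations x q"
    by unfold_locales auto
  thus thesis by (rule that)
qed

context rapid_approximations
begin

definition signed_error :: "nat \<Rightarrow> real" where
  "signed_error k = real (q k) * x - of_int (round (real (q k) * x))"

definition selected_error :: "(nat \<Rightarrow> bool) \<Rightarrow> nat \<Rightarrow> real" where
  "selected_error e k = (if e k then signed_error k else 0)"

definition y_of :: "(nat \<Rightarrow> bool) \<Rightarrow> real" where
  "y_of e = - (\<Sum>k. selected_error e k)"

definition n_of :: "(nat \<Rightarrow> bool) \<Rightarrow> nat \<Rightarrow> nat" where
  "n_of e j = (\<Sum>k<j. if e k then q k else 0)"

lemma dZ_q_le: "dZ (real (q k) * x) \<le> (1/2) ^ k"
  using dZ_le_mult[OF q_ge_1[of k], of "real (q k) * x"] q_dZ_less[of k] by linarith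

lemma dZ_q_decay: "dZ (real (q (j + i)) * x) \<le> (1/3) ^ i * dZ (real (q j) * x)"
proof (induction i)
  case (Suc i)
  have "dZ (real (q (j + Suc i)) * x) \<le> dZ (real (q (j + i)) * x) / 3"
    using dZ_q_Suc_less[of "j + i"] by simp
  also have "\<dots> \<le> (1/3) ^ i * dZ (real (q j) * x) / 3" using Suc.IH by simp
  finally show ?case by simp
qed simp

lemma summable_dZ_q: "summable (\<lambda>k. dZ (real (q k) * x))"
  by (rule summable_comparison_test'[OF summable_geometric[of "1/2"]]) (simp_all add: dZ_nonneg dZ_q_le)

lemma dZ_q_tail_le: "(\<Sum>i. dZ (real (q (i + j)) * x)) \<le> 3/2 * dZ (real (q j) * x)"
proof -
  have "(\<Sum>i. dZ (real (q (i + j)) * x)) \<le> (\<Sum>i. dZ (real (q j) * x) * (1/3) ^ i)"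
  proof (rule suminf_le)
    show "dZ (real (q (i + j)) * x) \<le> dZ (real (q j) * x) * (1/3) ^ i" for i
      using dZ_q_decay[of j i] by (simp add: add.commute mult.commute)
    show "summable (\<lambda>i. dZ (real (q (i + j)) * x))" by (rule summable_ignore_initial_segment[OF summable_dZ_q])
  qed (intro summable_mult summable_geometric, simp)
  also have "\<dots> = 3/2 * dZ (real (q j) * x)" by (simp add: suminf_mult suminf_geometric)
  finally show ?thesis .
qed

lemma abs_signed_error: "\<bar>signed_error k\<bar> = dZ (real (q k) * x)"
  by (simp add: signed_error_def dZ_eq_round)

lemma abs_selected_error_le: "\<bar>selected_error e k\<bar> \<le> dZ (real (q k) * x)"
  by (simp add: selected_error_def abs_signed_error dZ_nonneg)

lemma summable_selected_error: "summable (selected_error e)"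
  by (rule summable_comparison_test'[OF summable_dZ_q]) (simp add: abs_selected_error_le)

lemma abs_selected_error_tail_le: "\<bar>\<Sum>i. selected_error e (i + j)\<bar> \<le> 3/2 * dZ (real (q j) * x)"
proof -
  have summable_abs: "summable (\<lambda>i. \<bar>selected_error e (i + j)\<bar>)"
    by (rule summable_comparison_test'[OF summable_ignore_initial_segment[OF summable_dZ_q, of j]])
      (simp add: abs_selected_error_le)
  have "\<bar>\<Sum>i. selected_error e (i + j)\<bar> \<le> (\<Sum>i. \<bar>selected_error e (i + j)\<bar>)"
    by (rule summable_rabs[OF summable_abs])
  also have "\<dots> \<le> (\<Sum>i. dZ (real (q (i + j)) * x))"
    by (intro suminf_le summable_abs summable_ignore_initial_segment summable_dZ_q
        abs_selected_error_le)
  also have "\<dots> \<le> 3/2 * dZ (real (q j) * x)" by (rule dZ_q_tail_le)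
  finally show ?thesis .
qed

text \<open>The partial sums of \<open>y_of e\<close> cancel against \<open>n_of e j \<cdot> x\<close> up to an integer,
  leaving only the tail.\<close>
lemma dZ_n_of_y_of_le: "dZ (real (n_of e j) * x + y_of e) \<le> 3/2 * dZ (real (q j) * x)"
proof -
  define R where "R = (\<Sum>k<j. if e k then round (real (q k) * x) else 0)"
  have "real (n_of e j) * x = (\<Sum>k<j. selected_error e k + of_int (if e k then round (real (q k) * x) else 0))"
    unfolding n_of_def of_nat_sum sum_distrib_right
    by (intro sum.cong) (auto simp: selected_error_def signed_error_def)
  also have "\<dots> = (\<Sum>k<j. selected_error e k) + of_int R" by (simp add: sum.distrib R_def of_int_sum)
  finally have "real (n_of e j) * x + y_of e = - (\<Sum>i. selected_error e (i + j)) + of_int R"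
    using suminf_split_initial_segment[OF summable_selected_error, of e j] by (simp add: y_of_def)
  hence "dZ (real (n_of e j) * x + y_of e) = dZ (\<Sum>i. selected_error e (i + j))"
    by (metis dZ_add_Ints Ints_of_int dZ_minus)
  also have "\<dots> \<le> 3/2 * dZ (real (q j) * x)"
    using dZ_le_abs abs_selected_error_tail_le by (rule order.trans)
  finally show ?thesis .
qed

lemma n_of_Suc: "n_of e (Suc j) = n_of e j + (if e j then q j else 0)"
  by (simp add: n_of_def)

lemma n_of_mono: "j \<le> j' \<Longrightarrow> n_of e j \<le> n_of e j'"
  unfolding n_of_def by (intro sum_mono2) auto

lemma n_of_double_ge: "(\<And>i. e (2 * i)) \<Longrightarrow> i \<le> n_of e (2 * i)"
proof (induction i)
  case (Suc i)
  have "n_of e (2 * i) + 1 \<le> n_of e (Suc (2 * i))" using Suc.prems q_ge_1[of "2 * i"] by (simp add: n_of_Suc)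
  also have "\<dots> \<le> n_of e (2 * Suc i)" by (rule n_of_mono) simp
  finally show ?case using Suc by simp
qed simp

lemma block_sum_le:
  assumes "\<psi> \<in> DD" "1 \<le> n_of e j" "\<psi> (n_of e j) \<le> dZ (real (n_of e j) * x + y_of e)"
  shows "(\<Sum>n\<in>{n_of e j..<n_of e (Suc j)}. \<psi> n) \<le> 3/2 * (1/2) ^ j"
proof -
  have "(\<Sum>n\<in>{n_of e j..<n_of e (Suc j)}. \<psi> n) \<le> (\<Sum>n\<in>{n_of e j..<n_of e (Suc j)}. \<psi> (n_of e j))"
    using assms(2) by (intro sum_mono DD_antimono[OF assms(1)]) auto
  also have "\<dots> \<le> real (q j) * \<psi> (n_of e j)"
    using DD_nonneg[OF assms(1,2)] by (simp add: n_of_Suc)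
  also have "\<dots> \<le> real (q j) * (3/2 * dZ (real (q j) * x))"
    using assms(3) dZ_n_of_y_of_le[of e j] by (intro mult_left_mono) auto
  also have "\<dots> \<le> 3/2 * (1/2) ^ j" using q_dZ_less[of j] by simp
  finally show ?thesis .
qed

lemma blocks_sum_le:
  assumes "\<psi> \<in> DD" "1 \<le> n_of e j0" "\<And>n. n_of e j0 \<le> n \<Longrightarrow> \<psi> n \<le> dZ (real n * x + y_of e)"
  shows "(\<Sum>n\<in>{n_of e j0..<n_of e (j0 + i)}. \<psi> n) \<le> 3"
proof -
  have "(\<Sum>n\<in>{n_of e j0..<n_of e (j0 + i)}. \<psi> n) \<le> 3 * (1/2) ^ j0 - 3 * (1/2) ^ (j0 + i)"
  proof (induction i)
    case (Suc i)
    have mono: "n_of e j0 \<le> n_of e (j0 + i)" "n_of e (j0 + i) \<le> n_of e (Suc (j0 + i))"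
      by (simp_all add: n_of_mono)
    have "(\<Sum>n\<in>{n_of e j0..<n_of e (j0 + Suc i)}. \<psi> n)
        = (\<Sum>n\<in>{n_of e j0..<n_of e (j0 + i)}. \<psi> n) + (\<Sum>n\<in>{n_of e (j0 + i)..<n_of e (Suc (j0 + i))}. \<psi> n)"
      using mono by (simp add: sum.atLeastLessThan_concat)
    also have "(\<Sum>n\<in>{n_of e (j0 + i)..<n_of e (Suc (j0 + i))}. \<psi> n) \<le> 3/2 * (1/2) ^ (j0 + i)"
      using mono assms by (intro block_sum_le) auto
    finally show ?case using Suc.IH by simp
  qed simp
  moreover have "(1/2::real) ^ j0 \<le> 1" "0 \<le> (1/2::real) ^ (j0 + i)" by (simp_all add: power_le_one)
  ultimately show ?thesis by linarith
qed

lemma y_of_in_Phi: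
  assumes "\<And>i. e (2 * i)" shows "y_of e \<in> Phi x"
  unfolding Phi_iff_no_dominating_DD
proof clarify
  fix \<psi> n0 assume "\<psi> \<in> DD" and dominated: "\<forall>n\<ge>n0. \<psi> n \<le> dZ (real n * x + y_of e)"
  define j0 where "j0 = 2 * max n0 1"
  have j0: "max n0 1 \<le> n_of e j0" unfolding j0_def using assms by (rule n_of_double_ge)
  have "(\<Sum>n=1..N. \<psi> n) \<le> (\<Sum>n\<in>{1..<n_of e j0}. \<psi> n) + 3" for N
  proof -
    define J where "J = j0 + 2 * (N + 1)"
    have "N + 1 \<le> n_of e (2 * (N + 1))" using assms by (rule n_of_double_ge)
    also have "\<dots> \<le> n_of e J" by (rule n_of_mono) (simp add: J_def)
    finally have "(\<Sum>n=1..N. \<psi> n) \<le> (\<Sum>n\<in>{1..<n_of e J}. \<psi> n)"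
      using DD_nonneg[OF \<open>\<psi> \<in> DD\<close>] by (intro sum_mono2) auto
    also have "\<dots> = (\<Sum>n\<in>{1..<n_of e j0}. \<psi> n) + (\<Sum>n\<in>{n_of e j0..<n_of e J}. \<psi> n)"
      using j0 n_of_mono[of j0 J] by (simp add: J_def sum.atLeastLessThan_concat)
    also have "(\<Sum>n\<in>{n_of e j0..<n_of e J}. \<psi> n) \<le> 3"
      unfolding J_def using j0 dominated by (intro blocks_sum_le \<open>\<psi> \<in> DD\<close>) auto
    finally show ?thesis by simp
  qed
  with \<open>\<psi> \<in> DD\<close> show False by (rule DD_not_sum_bounded)
qed

lemma y_of_inj: "inj y_of"
proof (rule injI, rule ccontr)
  fix e e' assume "y_of e = y_of e'" "e \<noteq> e'"
  define k0 where "k0 = (LEAST k. e k \<noteq> e' k)"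
  have k0: "e k0 \<noteq> e' k0" unfolding k0_def by (rule LeastI_ex) (use \<open>e \<noteq> e'\<close> in blast)
  have before: "e k = e' k" if "k < k0" for k
    using not_less_Least[of k "\<lambda>k. e k \<noteq> e' k"] that unfolding k0_def by blast
  define g where "g k = selected_error e k - selected_error e' k" for k
  have "summable g" unfolding g_def by (intro summable_diff summable_selected_error)
  have "suminf g = 0"
    using \<open>y_of e = y_of e'\<close> suminf_diff[OF summable_selected_error summable_selected_error, of e e']
    unfolding g_def y_of_def by simp
  moreover have "(\<Sum>i<Suc k0. g i) = g k0" by (simp add: g_def selected_error_def before)
  ultimately have "0 = (\<Sum>i. g (i + Suc k0)) + g k0"
    using suminf_split_initial_segment[OF \<open>summable g\<close>, of "Suc k0"] by simp
  moreover have "\<bar>g k0\<bar> = dZ (real (q k0) * x)"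
    using k0 by (auto simp: g_def selected_error_def abs_signed_error)
  moreover have "\<bar>\<Sum>i. g (i + Suc k0)\<bar> < dZ (real (q k0) * x)"
  proof -
    have tail: "summable (\<lambda>i. selected_error e'' (i + Suc k0))" for e''
      by (rule summable_ignore_initial_segment[OF summable_selected_error])
    have "\<bar>\<Sum>i. g (i + Suc k0)\<bar> = \<bar>(\<Sum>i. selected_error e (i + Suc k0)) - (\<Sum>i. selected_error e' (i + Suc k0))\<bar>"
      unfolding g_def by (subst suminf_diff[OF tail tail]) (rule refl)
    also have "\<dots> \<le> 3 * dZ (real (q (Suc k0)) * x)"
      using abs_selected_error_tail_le[of e "Suc k0"] abs_selected_error_tail_le[of e' "Suc k0"] by linarith
    also have "\<dots> < dZ (real (q k0) * x)" using dZ_q_Suc_less[of k0] by simp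
    finally show ?thesis .
  qed
  ultimately show False by linarith
qed

end

lemma Phi_WA_irrational_eqpoll_real:
  assumes "x \<in> WA" "x \<notin> \<rat>" shows "Phi x \<approx> (UNIV :: real set)"
proof -
  obtain q where "rapid_approximations x q" using rapid_approximations_exist[OF assms] .
  then interpret rapid_approximations x q .
  define code :: "nat set \<Rightarrow> nat \<Rightarrow> bool" where "code S k = (even k \<or> k div 2 \<in> S)" for S k
  have "inj code"
  proof (rule injI)
    fix S T assume "code S = code T"
    hence "code S (2 * i + 1) = code T (2 * i + 1)" for i by simp
    thus "S = T" by (auto simp: code_def)
  qed
  with y_of_inj have "inj_on (y_of \<circ> code) UNIV" by (simp add: inj_compose)
  moreover have "(y_of \<circ> code) ` UNIV \<subseteq> Phi x" by (auto intro!: y_of_in_Phi simp: code_def)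
  ultimately have "(UNIV :: nat set set) \<lesssim> Phi x" unfolding lepoll_def by blast
  hence "(UNIV :: real set) \<lesssim> Phi x"
    using nat_sets_eqpoll_reals by (meson eqpoll_sym eqpoll_imp_lepoll lepoll_trans)
  thus ?thesis by (simp add: lepoll_antisym subset_imp_lepoll)
qed

theorem theorem19:
  fixes x :: real
  shows "(x \<in> \<rat> \<longrightarrow> Phi x \<approx> (UNIV :: nat set))
       \<and> (x \<in> WA - \<rat> \<longrightarrow> Phi x \<approx> (UNIV :: real set))
       \<and> (x \<in> Bad \<longrightarrow> Phi x = {})"
  using Phi_rational_eqpoll_nat Phi_WA_irrational_eqpoll_real Phi_Bad by blast

end
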